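(* Let $n\ge1$. Let $\Gamma_1$ be a cocompact lattice in the $(4n+1)$-dimensional Heisenberg group $H_{2n}$. Let $\Gamma_2$ be a discrete subgroup of the universal cover $\widetilde{SL(2,\mathbb R)}$ with compact quotient. Then the compact manifold $(H_{2n}\times\widetilde{SL(2,\mathbb R)})/(\Gamma_1\times\Gamma_2)$ admits an invariant HPKT structure which is not strong.
   Context: The Heisenberg Lie algebra $\mathfrak h_{2n}$ has basis $X_1,\dots,X_{2n},Y_1,\dots,Y_{2n},Z$ with nonzero brackets $[X_j,Y_j]=Z$. $H_{2n}$ is the corresponding simply connected Lie group. An almost hyper-paracomplex structure on a manifold is a triple $(J_1,J_2,J_3)$ of endomorphisms of the tangent bundle with $J_1^2=J_2^2=\mathrm{id}$, $J_3^2=-\mathrm{id}$ and $J_1J_2=-J_2J_1=J_3$. It is hyper-paracomplex if each $J_a$ has vanishing Nijenhuis tensor. A metric $g$ is hyperparahermitian if $g(J_1X,J_1Y)=g(J_2X,J_2Y)=-g(J_3X,J_3Y)=-g(X,Y)$. An HPKT structure is a hyper-paracomplex structure together with a hyperparahermitian metric admitting a linear connection $\nabla$ with $\nabla g=\nabla J_a=0$ and totally skew-symmetric torsion $T^\nabla$. It is strong if the torsion 3-form is closed. "Invariant" means induced by left-invariant structures on the group, with the discrete subgroup acting by left translations. *)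

theory Defs
  imports Complex_Main
begin

text \<open>
  Left-invariant (= invariant) tensors on G = H_{2n} x universal cover of SL(2,R) are
  encoded on the Lie algebra g = h_{2n} + sl(2,R) of dimension 4n+4, in the basis
  (index: element)
    0 .. 2n-1   : X_1 .. X_{2n}
    2n .. 4n-1  : Y_1 .. Y_{2n}
    4n          : Z
    4n+1, 4n+2, 4n+3 : H, E, F   with [H,E]=2E, [H,F]=-2F, [E,F]=H.
  Vectors are functions nat => real whose coordinates of index >= 4n+4 vanish;
  endomorphisms / bilinear forms are given by their matrices nat => nat => real
  (only entries with indices < 4n+4 matter); a left-invariant linear connection is
  given by its coefficients Gam i j k, nabla_(e_i) e_j = sum_k Gam i j k e_k.
\<close>

definition gdim :: "nat \<Rightarrow> nat" where
  "gdim n = 4 * n + 4"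

definition gvecs :: "nat \<Rightarrow> (nat \<Rightarrow> real) set" where
  "gvecs n = {v. \<forall>i. gdim n \<le> i \<longrightarrow> v i = 0}"

definition sc :: "nat \<Rightarrow> nat \<Rightarrow> nat \<Rightarrow> nat \<Rightarrow> real" where
  "sc n i j k =
     (let m = 2 * n; Z = 2 * m; H = 2 * m + 1; E = 2 * m + 2; F = 2 * m + 3 in
      if i < m \<and> j = i + m \<and> k = Z then 1
      else if j < m \<and> i = j + m \<and> k = Z then -1
      else if i = H \<and> j = E \<and> k = E then 2
      else if i = E \<and> j = H \<and> k = E then -2
      else if i = H \<and> j = F \<and> k = F then -2
      else if i = F \<and> j = H \<and> k = F then 2
      else if i = E \<and> j = F \<and> k = H then 1
      else if i = F \<and> j = E \<and> k = H then -1
      else 0)"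

definition lbr :: "nat \<Rightarrow> (nat \<Rightarrow> real) \<Rightarrow> (nat \<Rightarrow> real) \<Rightarrow> (nat \<Rightarrow> real)" where
  "lbr n x y = (\<lambda>k. if k < gdim n then
      (\<Sum>i<gdim n. \<Sum>j<gdim n. x i * y j * sc n i j k) else 0)"

definition app :: "nat \<Rightarrow> (nat \<Rightarrow> nat \<Rightarrow> real) \<Rightarrow> (nat \<Rightarrow> real) \<Rightarrow> (nat \<Rightarrow> real)" where
  "app n A x = (\<lambda>i. if i < gdim n then (\<Sum>j<gdim n. A i j * x j) else 0)"

definition bil :: "nat \<Rightarrow> (nat \<Rightarrow> nat \<Rightarrow> real) \<Rightarrow> (nat \<Rightarrow> real) \<Rightarrow> (nat \<Rightarrow> real) \<Rightarrow> real" where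
  "bil n G x y = (\<Sum>i<gdim n. \<Sum>j<gdim n. G i j * x i * y j)"

definition conn :: "nat \<Rightarrow> (nat \<Rightarrow> nat \<Rightarrow> nat \<Rightarrow> real) \<Rightarrow> (nat \<Rightarrow> real) \<Rightarrow> (nat \<Rightarrow> real) \<Rightarrow> (nat \<Rightarrow> real)" where
  "conn n Gam x y = (\<lambda>k. if k < gdim n then
      (\<Sum>i<gdim n. \<Sum>j<gdim n. x i * y j * Gam i j k) else 0)"

definition nijenhuis :: "nat \<Rightarrow> (nat \<Rightarrow> nat \<Rightarrow> real) \<Rightarrow> (nat \<Rightarrow> real) \<Rightarrow> (nat \<Rightarrow> real) \<Rightarrow> (nat \<Rightarrow> real)" where
  "nijenhuis n J x y = (\<lambda>k. lbr n (app n J x) (app n J y) k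
      - app n J (lbr n (app n J x) y) k - app n J (lbr n x (app n J y)) k
      + app n J (app n J (lbr n x y)) k)"

definition almost_hyper_paracomplex ::
  "nat \<Rightarrow> (nat \<Rightarrow> nat \<Rightarrow> real) \<Rightarrow> (nat \<Rightarrow> nat \<Rightarrow> real) \<Rightarrow> (nat \<Rightarrow> nat \<Rightarrow> real) \<Rightarrow> bool" where
  "almost_hyper_paracomplex n J1 J2 J3 \<longleftrightarrow>
     (\<forall>x\<in>gvecs n.
        app n J1 (app n J1 x) = x \<and>
        app n J2 (app n J2 x) = x \<and>
        app n J3 (app n J3 x) = (\<lambda>i. - x i) \<and>
        app n J1 (app n J2 x) = app n J3 x \<and>
        app n J2 (app n J1 x) = (\<lambda>i. - app n J3 x i))"

definition hyper_paracomplex ::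
  "nat \<Rightarrow> (nat \<Rightarrow> nat \<Rightarrow> real) \<Rightarrow> (nat \<Rightarrow> nat \<Rightarrow> real) \<Rightarrow> (nat \<Rightarrow> nat \<Rightarrow> real) \<Rightarrow> bool" where
  "hyper_paracomplex n J1 J2 J3 \<longleftrightarrow>
     almost_hyper_paracomplex n J1 J2 J3 \<and>
     (\<forall>x\<in>gvecs n. \<forall>y\<in>gvecs n.
        nijenhuis n J1 x y = (\<lambda>_. 0) \<and>
        nijenhuis n J2 x y = (\<lambda>_. 0) \<and>
        nijenhuis n J3 x y = (\<lambda>_. 0))"

definition metric :: "nat \<Rightarrow> (nat \<Rightarrow> nat \<Rightarrow> real) \<Rightarrow> bool" where
  "metric n G \<longleftrightarrow>
     (\<forall>x\<in>gvecs n. \<forall>y\<in>gvecs n. bil n G x y = bil n G y x) \<and>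
     (\<forall>x\<in>gvecs n. (\<forall>y\<in>gvecs n. bil n G x y = 0) \<longrightarrow> x = (\<lambda>_. 0))"

definition hyperparahermitian ::
  "nat \<Rightarrow> (nat \<Rightarrow> nat \<Rightarrow> real) \<Rightarrow> (nat \<Rightarrow> nat \<Rightarrow> real) \<Rightarrow> (nat \<Rightarrow> nat \<Rightarrow> real)
     \<Rightarrow> (nat \<Rightarrow> nat \<Rightarrow> real) \<Rightarrow> bool" where
  "hyperparahermitian n G J1 J2 J3 \<longleftrightarrow> metric n G \<and>
     (\<forall>x\<in>gvecs n. \<forall>y\<in>gvecs n.
        bil n G (app n J1 x) (app n J1 y) = - bil n G x y \<and>
        bil n G (app n J2 x) (app n J2 y) = - bil n G x y \<and>
        - bil n G (app n J3 x) (app n J3 y) = - bil n G x y)"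

definition torsion :: "nat \<Rightarrow> (nat \<Rightarrow> nat \<Rightarrow> nat \<Rightarrow> real) \<Rightarrow> (nat \<Rightarrow> real) \<Rightarrow> (nat \<Rightarrow> real) \<Rightarrow> (nat \<Rightarrow> real)" where
  "torsion n Gam x y = (\<lambda>k. conn n Gam x y k - conn n Gam y x k - lbr n x y k)"

definition torsion_form :: "nat \<Rightarrow> (nat \<Rightarrow> nat \<Rightarrow> real) \<Rightarrow> (nat \<Rightarrow> nat \<Rightarrow> nat \<Rightarrow> real)
     \<Rightarrow> (nat \<Rightarrow> real) \<Rightarrow> (nat \<Rightarrow> real) \<Rightarrow> (nat \<Rightarrow> real) \<Rightarrow> real" where
  "torsion_form n G Gam x y z = bil n G (torsion n Gam x y) z"

definition hpkt_connection ::
  "nat \<Rightarrow> (nat \<Rightarrow> nat \<Rightarrow> real) \<Rightarrow> (nat \<Rightarrow> nat \<Rightarrow> real) \<Rightarrow> (nat \<Rightarrow> nat \<Rightarrow> real)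
     \<Rightarrow> (nat \<Rightarrow> nat \<Rightarrow> real) \<Rightarrow> (nat \<Rightarrow> nat \<Rightarrow> nat \<Rightarrow> real) \<Rightarrow> bool" where
  "hpkt_connection n G J1 J2 J3 Gam \<longleftrightarrow>
     (\<forall>x\<in>gvecs n. \<forall>y\<in>gvecs n. \<forall>z\<in>gvecs n.
        bil n G (conn n Gam x y) z + bil n G y (conn n Gam x z) = 0) \<and>
     (\<forall>x\<in>gvecs n. \<forall>y\<in>gvecs n.
        conn n Gam x (app n J1 y) = app n J1 (conn n Gam x y) \<and>
        conn n Gam x (app n J2 y) = app n J2 (conn n Gam x y) \<and>
        conn n Gam x (app n J3 y) = app n J3 (conn n Gam x y)) \<and>
     (\<forall>x\<in>gvecs n. \<forall>y\<in>gvecs n. \<forall>z\<in>gvecs n.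
        torsion_form n G Gam x y z = - torsion_form n G Gam x z y)"

text \<open>exterior derivative of a left-invariant 3-form c vanishes (Chevalley-Eilenberg)\<close>
definition torsion_closed :: "nat \<Rightarrow> (nat \<Rightarrow> nat \<Rightarrow> real) \<Rightarrow> (nat \<Rightarrow> nat \<Rightarrow> nat \<Rightarrow> real) \<Rightarrow> bool" where
  "torsion_closed n G Gam \<longleftrightarrow>
     (let c = torsion_form n G Gam; b = lbr n in
      \<forall>x0\<in>gvecs n. \<forall>x1\<in>gvecs n. \<forall>x2\<in>gvecs n. \<forall>x3\<in>gvecs n.
        - c (b x0 x1) x2 x3 + c (b x0 x2) x1 x3 - c (b x0 x3) x1 x2
        - c (b x1 x2) x0 x3 + c (b x1 x3) x0 x2 - c (b x2 x3) x0 x1 = 0)"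

definition invariant_HPKT ::
  "nat \<Rightarrow> (nat \<Rightarrow> nat \<Rightarrow> real) \<Rightarrow> (nat \<Rightarrow> nat \<Rightarrow> real) \<Rightarrow> (nat \<Rightarrow> nat \<Rightarrow> real)
     \<Rightarrow> (nat \<Rightarrow> nat \<Rightarrow> real) \<Rightarrow> bool" where
  "invariant_HPKT n G J1 J2 J3 \<longleftrightarrow>
     hyper_paracomplex n J1 J2 J3 \<and> hyperparahermitian n G J1 J2 J3 \<and>
     (\<exists>Gam. hpkt_connection n G J1 J2 J3 Gam)"

end

theory Submission
  imports Defs
begin

(* On the Heisenberg part
   V = span{X_j, Y_j} the endomorphisms act by J_1 X_j = X_j, J_1 Y_j = -Y_j, J_2 X_j = -Y_j,
   J_3 X_j = Y_j, and on span{Z, H, E, F} by a hyper-paracomplex structure mixing the centre Z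
   with sl(2,R); the metric is neutral, and the connection with nabla_Z = R, a rotation of V
   commuting with the J_a, and nabla = 0 otherwise is HPKT.

   Non-strongness holds for every HPKT connection nabla. Metricity and total skew-symmetry of
   the torsion give g(nabla_x w, x) = g([x, w], x). Since Z = J_2 (E + F)/2, J_2 Y_j = -X_j,
   J_2 X_j = -Y_j and [V, sl(2,R)] = 0, parallelism of J_2 forces
   g(nabla_{X_j} Z, Y_j) = g(nabla_{Y_j} Z, X_j) = 0, hence T(Z, X_j, Y_j) = -g([X_j, Y_j], Z) = -1.
   Therefore dT(X_1, X_{n+1}, Y_1, Y_{n+1}) = T(Z, X_{n+1}, Y_{n+1}) + T(Z, X_1, Y_1) = -2. *)

section \<open>Coordinate calculus\<close>

definition idx_Z :: "nat \<Rightarrow> nat" where "idx_Z n = 4 * n"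
definition idx_H :: "nat \<Rightarrow> nat" where "idx_H n = 4 * n + 1"
definition idx_E :: "nat \<Rightarrow> nat" where "idx_E n = 4 * n + 2"
definition idx_F :: "nat \<Rightarrow> nat" where "idx_F n = 4 * n + 3"

lemmas idx_defs = idx_Z_def idx_H_def idx_E_def idx_F_def

definition basis_vec :: "nat \<Rightarrow> nat \<Rightarrow> real" where
  "basis_vec a = (\<lambda>k. if k = a then 1 else 0)"

lemma sum_eq_single:
  fixes f :: "nat \<Rightarrow> real"
  assumes "a < N" "\<And>j. j < N \<Longrightarrow> j \<noteq> a \<Longrightarrow> f j = 0"
  shows "(\<Sum>j<N. f j) = f a"
  using assms by (subst sum.mono_neutral_right[of "{..<N}" "{a}"]) auto

lemma sum_eq_pair:
  fixes f :: "nat \<Rightarrow> real"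
  assumes "a < N" "b < N" "a \<noteq> b" "\<And>j. j < N \<Longrightarrow> j \<noteq> a \<Longrightarrow> j \<noteq> b \<Longrightarrow> f j = 0"
  shows "(\<Sum>j<N. f j) = f a + f b"
  using assms by (subst sum.mono_neutral_right[of "{..<N}" "{a, b}"]) auto

lemma sum_add_lessThan:
  fixes f :: "nat \<Rightarrow> real"
  shows "(\<Sum>i<a + b. f i) = (\<Sum>i<a. f i) + (\<Sum>i<b. f (i + a))"
  by (induction b) (simp_all add: add.commute)

lemma sum_gdim_blocks:
  fixes f :: "nat \<Rightarrow> real"
  shows "(\<Sum>i<gdim n. f i) = (\<Sum>j<n. f j + f (j + n) + f (j + 2 * n) + f (j + 3 * n))
     + f (idx_Z n) + f (idx_H n) + f (idx_E n) + f (idx_F n)"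
proof -
  have dim: "gdim n = n + n + n + n + Suc (Suc (Suc (Suc 0)))"
    by (simp add: gdim_def)
  show ?thesis
    unfolding dim sum_add_lessThan
    by (simp add: sum.distrib algebra_simps mult_2_right numeral_eq_Suc idx_defs)
qed

lemma basis_vec_in_gvecs: "a < gdim n \<Longrightarrow> basis_vec a \<in> gvecs n"
  by (simp add: gvecs_def basis_vec_def)

lemma conn_in_gvecs: "conn n Gam x y \<in> gvecs n"
  by (simp add: gvecs_def conn_def)

lemma app_in_gvecs: "app n A x \<in> gvecs n"
  by (simp add: gvecs_def app_def)

lemma app_outside: "gdim n \<le> i \<Longrightarrow> app n A x i = 0"
  by (simp add: app_def)

lemma conn_outside: "gdim n \<le> k \<Longrightarrow> conn n Gam x y k = 0"
  by (simp add: conn_def)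

lemma lbr_outside: "gdim n \<le> k \<Longrightarrow> lbr n x y k = 0"
  by (simp add: lbr_def)

lemma gvecs_outside: "x \<in> gvecs n \<Longrightarrow> gdim n \<le> k \<Longrightarrow> x k = 0"
  by (simp add: gvecs_def)

lemma vec_eq_blocksI:
  fixes f g :: "nat \<Rightarrow> real"
  assumes "\<And>j. j < n \<Longrightarrow> f j = g j" "\<And>j. j < n \<Longrightarrow> f (j + n) = g (j + n)"
    "\<And>j. j < n \<Longrightarrow> f (j + 2 * n) = g (j + 2 * n)" "\<And>j. j < n \<Longrightarrow> f (j + 3 * n) = g (j + 3 * n)"
    "f (idx_Z n) = g (idx_Z n)" "f (idx_H n) = g (idx_H n)"
    "f (idx_E n) = g (idx_E n)" "f (idx_F n) = g (idx_F n)"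
    "\<And>k. gdim n \<le> k \<Longrightarrow> f k = g k"
  shows "f = g"
proof
  fix k
  consider "k < n" | "n \<le> k" "k < 2 * n" | "2 * n \<le> k" "k < 3 * n" | "3 * n \<le> k" "k < 4 * n"
    | "k = idx_Z n" | "k = idx_H n" | "k = idx_E n" | "k = idx_F n" | "gdim n \<le> k"
    unfolding idx_defs gdim_def by linarith
  then show "f k = g k"
  proof cases
    case 2
    then show ?thesis using assms(2)[of "k - n"] by simp
  next
    case 3
    then show ?thesis using assms(3)[of "k - 2 * n"] by simp
  next
    case 4
    then show ?thesis using assms(4)[of "k - 3 * n"] by simp
  qed (use assms in auto)
qed

lemma bil_uminus_left: "bil n G (\<lambda>k. - x k) y = - bil n G x y"
  by (simp add: bil_def sum_negf[symmetric])

lemma bil_uminus_right: "bil n G x (\<lambda>k. - y k) = - bil n G x y"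
  by (simp add: bil_def sum_negf[symmetric])

lemma bil_zero_left: "bil n G (\<lambda>_. 0) y = 0"
  by (simp add: bil_def)

lemma bil_app: "bil n A x y = (\<Sum>i<gdim n. x i * app n A y i)"
  by (simp add: bil_def app_def sum_distrib_left mult_ac)

section \<open>The Lie bracket of h_{2n} + sl(2,R)\<close>

lemma sc_antisym: "sc n j i k = - sc n i j k"
  by (simp add: sc_def Let_def)

lemma lbr_antisym: "lbr n y x = (\<lambda>k. - lbr n x y k)"
proof
  fix k
  have "y i * x j * sc n i j k = - (x j * y i * sc n j i k)" for i j
    using sc_antisym[of n j i k] by simp
  then have "(\<Sum>i<gdim n. \<Sum>j<gdim n. y i * x j * sc n i j k)
      = - (\<Sum>j<gdim n. \<Sum>i<gdim n. x j * y i * sc n j i k)"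
    by (subst sum.swap) (simp add: sum_negf)
  then show "lbr n y x k = - lbr n x y k"
    by (simp add: lbr_def)
qed

lemma lbr_basis_left:
  "a < gdim n \<Longrightarrow>
     lbr n (basis_vec a) y = (\<lambda>k. if k < gdim n then \<Sum>j<gdim n. y j * sc n a j k else 0)"
  unfolding lbr_def by (intro ext) (subst sum_eq_single[of a]; auto simp: basis_vec_def)

lemma lbr_basis_pair:
  assumes "j < 2 * n"
  shows "lbr n (basis_vec j) (basis_vec (j + 2 * n)) = basis_vec (idx_Z n)"
proof
  fix k
  have "(\<Sum>l<gdim n. basis_vec (j + 2 * n) l * sc n j l k) = sc n j (j + 2 * n) k"
    using assms by (subst sum_eq_single[of "j + 2 * n"]) (auto simp: basis_vec_def gdim_def)
  then show "lbr n (basis_vec j) (basis_vec (j + 2 * n)) k = basis_vec (idx_Z n) k"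
    using assms by (simp add: lbr_basis_left gdim_def) (simp add: sc_def Let_def basis_vec_def idx_Z_def)
qed

lemma lbr_basis_V_zero:
  assumes "a < 4 * n" "b < 4 * n" "b \<noteq> a + 2 * n" "a \<noteq> b + 2 * n"
  shows "lbr n (basis_vec a) (basis_vec b) = (\<lambda>_. 0)"
proof
  fix k
  have "(\<Sum>l<gdim n. basis_vec b l * sc n a l k) = 0"
    using assms by (intro sum.neutral) (auto simp: basis_vec_def sc_def Let_def)
  then show "lbr n (basis_vec a) (basis_vec b) k = 0"
    using assms by (simp add: lbr_basis_left gdim_def)
qed

definition omega :: "nat \<Rightarrow> (nat \<Rightarrow> real) \<Rightarrow> (nat \<Rightarrow> real) \<Rightarrow> real" where
  "omega n x y = (\<Sum>j<n. x j * y (j + 2 * n) - x (j + 2 * n) * y j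
                        + x (j + n) * y (j + 3 * n) - x (j + 3 * n) * y (j + n))"

lemma sc_Z:
  "sc n i j (idx_Z n) = (if i < 2 * n \<and> j = i + 2 * n then 1 else if j < 2 * n \<and> i = j + 2 * n then -1 else 0)"
  by (simp add: sc_def Let_def idx_Z_def)

lemma lbr_Z_row:
  "(\<Sum>j<gdim n. x i * y j * sc n i j (idx_Z n))
     = (if i < 2 * n then x i * y (i + 2 * n) else if i < 4 * n then - (x i * y (i - 2 * n)) else 0)"
proof -
  consider "i < 2 * n" | "2 * n \<le> i" "i < 4 * n" | "4 * n \<le> i"
    by linarith
  then show ?thesis
  proof cases
    case 1
    then show ?thesis by (subst sum_eq_single[of "i + 2 * n"]) (auto simp: sc_Z gdim_def)
  next
    case 2
    then show ?thesis by (subst sum_eq_single[of "i - 2 * n"]) (auto simp: sc_Z gdim_def)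
  next
    case 3
    then show ?thesis by (auto simp: sc_Z gdim_def intro!: sum.neutral)
  qed
qed

lemma lbr_Z: "lbr n x y (idx_Z n) = omega n x y"
proof -
  define r where "r i = (if i < 2 * n then x i * y (i + 2 * n) else if i < 4 * n then - (x i * y (i - 2 * n)) else 0)" for i
  have blocks: "r j + r (j + n) + r (j + 2 * n) + r (j + 3 * n)
      = x j * y (j + 2 * n) - x (j + 2 * n) * y j + x (j + n) * y (j + 3 * n) - x (j + 3 * n) * y (j + n)"
    if "j < n" for j
  proof -
    have "j + 3 * n - 2 * n = j + n" "j + 2 * n - 2 * n = j"
      by simp_all
    then show ?thesis
      unfolding r_def using that by (simp add: add.commute)
  qed
  have "idx_Z n < gdim n"
    by (simp add: idx_Z_def gdim_def)
  then have "lbr n x y (idx_Z n) = (\<Sum>i<gdim n. r i)"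
    by (simp add: lbr_def lbr_Z_row r_def)
  also have "\<dots> = omega n x y"
  proof -
    have "r (idx_Z n) = 0" "r (idx_H n) = 0" "r (idx_E n) = 0" "r (idx_F n) = 0"
      by (simp_all add: r_def idx_defs)
    then show ?thesis
      unfolding sum_gdim_blocks omega_def using blocks by simp
  qed
  finally show ?thesis .
qed

lemma double_sum_two_terms:
  fixes x y :: "nat \<Rightarrow> real"
  assumes "i1 \<noteq> i2" "i1 < N" "j1 < N" "i2 < N" "j2 < N"
    "\<And>i j. s i j = (if i = i1 \<and> j = j1 then v1 else if i = i2 \<and> j = j2 then v2 else 0)"
  shows "(\<Sum>i<N. \<Sum>j<N. x i * y j * s i j) = v1 * x i1 * y j1 + v2 * x i2 * y j2"
proof -
  have row: "(\<Sum>j<N. x i * y j * s i j)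
      = (if i = i1 then v1 * x i1 * y j1 else if i = i2 then v2 * x i2 * y j2 else 0)" for i
    using assms by (cases "i = i1"; cases "i = i2")
      (auto intro!: sum.neutral simp: sum_eq_single[of j1] sum_eq_single[of j2])
  show ?thesis
    unfolding row using assms by (subst sum_eq_pair[of i1 _ i2]) auto
qed

lemma lbr_H: "lbr n x y (idx_H n) = x (idx_E n) * y (idx_F n) - x (idx_F n) * y (idx_E n)"
  unfolding lbr_def idx_defs
  by (subst double_sum_two_terms[of "4*n+2" "4*n+3" _ "4*n+3" "4*n+2" _ 1 "-1"])
    (auto simp: sc_def Let_def gdim_def)

lemma lbr_E: "lbr n x y (idx_E n) = 2 * (x (idx_H n) * y (idx_E n) - x (idx_E n) * y (idx_H n))"
  unfolding lbr_def idx_defs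
  by (subst double_sum_two_terms[of "4*n+1" "4*n+2" _ "4*n+2" "4*n+1" _ 2 "-2"])
    (auto simp: sc_def Let_def gdim_def)

lemma lbr_F: "lbr n x y (idx_F n) = -2 * (x (idx_H n) * y (idx_F n) - x (idx_F n) * y (idx_H n))"
  unfolding lbr_def idx_defs
  by (subst double_sum_two_terms[of "4*n+1" "4*n+3" _ "4*n+3" "4*n+1" _ "-2" 2])
    (auto simp: sc_def Let_def gdim_def)

lemma lbr_V:
  assumes "j < n"
  shows "lbr n x y j = 0" "lbr n x y (j + n) = 0" "lbr n x y (j + 2 * n) = 0" "lbr n x y (j + 3 * n) = 0"
  using assms by (auto simp: lbr_def sc_def Let_def)

section \<open>Torsion of metric connections\<close>

lemma torsion_form_expand:
  "torsion_form n G Gam x y z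
     = bil n G (conn n Gam x y) z - bil n G (conn n Gam y x) z - bil n G (lbr n x y) z"
  by (simp add: torsion_form_def torsion_def bil_def left_diff_distrib right_diff_distrib sum_subtractf)

lemma torsion_form_antisym: "torsion_form n G Gam y x z = - torsion_form n G Gam x y z"
  unfolding torsion_form_expand lbr_antisym[of n y x] bil_uminus_left by simp

lemma torsion_form_zero_left: "torsion_form n G Gam (\<lambda>_. 0) y z = 0"
  by (simp add: torsion_form_def torsion_def conn_def lbr_def bil_def)

lemma hpkt_conn_skew_adjoint:
  assumes "metric n G" "hpkt_connection n G J1 J2 J3 Gam" "x \<in> gvecs n" "y \<in> gvecs n" "z \<in> gvecs n"
  shows "bil n G (conn n Gam x y) z = - bil n G (conn n Gam x z) y"
  using assms conn_in_gvecs unfolding metric_def hpkt_connection_def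
  by (metis add_eq_0_iff)

lemma hpkt_torsion_form_antisym:
  assumes "hpkt_connection n G J1 J2 J3 Gam" "x \<in> gvecs n" "y \<in> gvecs n" "z \<in> gvecs n"
  shows "torsion_form n G Gam x y z = - torsion_form n G Gam x z y"
  using assms unfolding hpkt_connection_def by blast

lemma hpkt_conn_self_pairing:
  assumes "metric n G" "hpkt_connection n G J1 J2 J3 Gam" "x \<in> gvecs n" "w \<in> gvecs n"
  shows "bil n G (conn n Gam x w) x = bil n G (lbr n x w) x"
proof -
  have "torsion_form n G Gam x w x = - torsion_form n G Gam x x w"
    using hpkt_torsion_form_antisym[OF assms(2,3,4,3)] .
  moreover have "torsion_form n G Gam x x w = 0"
    using torsion_form_antisym[of n G Gam x x w] by simp
  moreover have "bil n G (conn n Gam w x) x = 0"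
    using hpkt_conn_skew_adjoint[OF assms(1,2,4,3,3)] by simp
  ultimately show ?thesis
    unfolding torsion_form_expand by simp
qed

lemma hyperparahermitian_J2_skew:
  assumes "hyperparahermitian n G J1 J2 J3" "almost_hyper_paracomplex n J1 J2 J3"
    "u \<in> gvecs n" "v \<in> gvecs n"
  shows "bil n G (app n J2 u) v = - bil n G u (app n J2 v)"
proof -
  have "bil n G (app n J2 u) v = bil n G (app n J2 u) (app n J2 (app n J2 v))"
    using assms(2,4) unfolding almost_hyper_paracomplex_def by simp
  also have "\<dots> = - bil n G u (app n J2 v)"
    using assms(1,3) app_in_gvecs unfolding hyperparahermitian_def by blast
  finally show ?thesis .
qed

lemma hpkt_conn_J2_pairing_vanish:
  assumes hph: "hyperparahermitian n G J1 J2 J3" and ahp: "almost_hyper_paracomplex n J1 J2 J3"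
    and hpkt: "hpkt_connection n G J1 J2 J3 Gam"
    and mem: "x \<in> gvecs n" "w \<in> gvecs n" "v \<in> gvecs n"
    and J2v: "app n J2 v = (\<lambda>k. - x k)" and comm: "lbr n x w = (\<lambda>_. 0)"
  shows "bil n G (conn n Gam x (app n J2 w)) v = 0"
proof -
  have metric: "metric n G"
    using hph unfolding hyperparahermitian_def by blast
  have "conn n Gam x (app n J2 w) = app n J2 (conn n Gam x w)"
    using hpkt mem unfolding hpkt_connection_def by blast
  then have "bil n G (conn n Gam x (app n J2 w)) v = - bil n G (conn n Gam x w) (app n J2 v)"
    using hyperparahermitian_J2_skew[OF hph ahp conn_in_gvecs mem(3)] by simp
  also have "\<dots> = bil n G (conn n Gam x w) x"
    unfolding J2v bil_uminus_right by simp
  also have "\<dots> = bil n G (lbr n x w) x"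
    using hpkt_conn_self_pairing[OF metric hpkt mem(1,2)] .
  finally show ?thesis
    unfolding comm bil_zero_left .
qed

section \<open>The hyper-paracomplex structure, the metric and the connection\<close>

definition sparse_mat ::
  "(nat \<Rightarrow> nat) \<Rightarrow> (nat \<Rightarrow> real) \<Rightarrow> (nat \<Rightarrow> nat) \<Rightarrow> (nat \<Rightarrow> real) \<Rightarrow> nat \<Rightarrow> nat \<Rightarrow> real" where
  "sparse_mat p c q d i j = (if j = p i then c i else 0) + (if j = q i then d i else 0)"

lemma app_sparse_mat:
  assumes "\<And>i. i < gdim n \<Longrightarrow> p i < gdim n \<and> q i < gdim n"
  shows "app n (sparse_mat p c q d) x i = (if i < gdim n then c i * x (p i) + d i * x (q i) else 0)"
proof (cases "i < gdim n")
  case True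
  have "sparse_mat p c q d i j * x j
      = (if j = p i then c i * x (p i) else 0) + (if j = q i then d i * x (q i) else 0)" for j
    by (simp add: sparse_mat_def ring_distribs)
  then show ?thesis
    using True assms[OF True] by (simp add: app_def sum.distrib)
qed (simp add: app_def)

definition J1_col :: "nat \<Rightarrow> nat \<Rightarrow> nat" where
  "J1_col n i = (if i = 4*n then 4*n+1 else if i = 4*n+1 then 4*n else i)"
definition J1_coef :: "nat \<Rightarrow> nat \<Rightarrow> real" where
  "J1_coef n i = (if i < 2*n then 1 else if i < 4*n then -1 else if i = 4*n then 2 else
     if i = 4*n+1 then 1/2 else if i = 4*n+2 then 1 else if i = 4*n+3 then -1 else 0)"
definition J23_col1 :: "nat \<Rightarrow> nat \<Rightarrow> nat" where
  "J23_col1 n i = (if i < 2*n then i+2*n else if i < 4*n then i-2*n else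
     if i = 4*n \<or> i = 4*n+1 then 4*n+2 else if i = 4*n+2 \<or> i = 4*n+3 then 4*n else i)"
definition J23_col2 :: "nat \<Rightarrow> nat \<Rightarrow> nat" where
  "J23_col2 n i = (if i = 4*n \<or> i = 4*n+1 then 4*n+3 else if i = 4*n+2 \<or> i = 4*n+3 then 4*n+1 else i)"
definition J2_coef1 :: "nat \<Rightarrow> nat \<Rightarrow> real" where
  "J2_coef1 n i = (if i < 4*n then -1 else if i = 4*n then 1 else if i = 4*n+1 then -1/2 else
     if i = 4*n+2 then 1/2 else if i = 4*n+3 then 1/2 else 0)"
definition J2_coef2 :: "nat \<Rightarrow> nat \<Rightarrow> real" where
  "J2_coef2 n i = (if i = 4*n then 1 else if i = 4*n+1 then 1/2 else if i = 4*n+2 then -1 else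
     if i = 4*n+3 then 1 else 0)"
definition J3_coef1 :: "nat \<Rightarrow> nat \<Rightarrow> real" where
  "J3_coef1 n i = (if i < 2*n then -1 else if i < 4*n then 1 else if i = 4*n then -1 else
     if i = 4*n+1 then 1/2 else if i = 4*n+2 then 1/2 else if i = 4*n+3 then -1/2 else 0)"
definition J3_coef2 :: "nat \<Rightarrow> nat \<Rightarrow> real" where
  "J3_coef2 n i = (if i = 4*n then 1 else if i = 4*n+1 then 1/2 else if i = 4*n+2 then -1 else
     if i = 4*n+3 then -1 else 0)"
definition G_col :: "nat \<Rightarrow> nat \<Rightarrow> nat" where
  "G_col n i = (if i < n then i+3*n else if i < 2*n then i+n else if i < 3*n then i-n else
     if i < 4*n then i-3*n else if i = 4*n+2 then 4*n+3 else if i = 4*n+3 then 4*n+2 else i)"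
definition G_coef :: "nat \<Rightarrow> nat \<Rightarrow> real" where
  "G_coef n i = (if i < n then 1 else if i < 3*n then -1 else if i < 4*n then 1 else
     if i = 4*n then 1 else if i = 4*n+1 then -4 else if i = 4*n+2 then -2 else if i = 4*n+3 then -2 else 0)"
definition R_col :: "nat \<Rightarrow> nat \<Rightarrow> nat" where
  "R_col n i = (if i < n then i+n else if i < 2*n then i-n else if i < 3*n then i+n else
     if i < 4*n then i-n else i)"
definition R_coef :: "nat \<Rightarrow> nat \<Rightarrow> real" where
  "R_coef n i = (if i < n then -1 else if i < 2*n then 1 else if i < 3*n then -1 else
     if i < 4*n then 1 else 0)"

lemmas structure_coef_defs = J1_col_def J1_coef_def J23_col1_def J23_col2_def J2_coef1_def
  J2_coef2_def J3_coef1_def J3_coef2_def G_col_def G_coef_def R_col_def R_coef_def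

definition J1_mat :: "nat \<Rightarrow> nat \<Rightarrow> nat \<Rightarrow> real" where
  "J1_mat n = sparse_mat (J1_col n) (J1_coef n) (J1_col n) (\<lambda>_. 0)"
definition J2_mat :: "nat \<Rightarrow> nat \<Rightarrow> nat \<Rightarrow> real" where
  "J2_mat n = sparse_mat (J23_col1 n) (J2_coef1 n) (J23_col2 n) (J2_coef2 n)"
definition J3_mat :: "nat \<Rightarrow> nat \<Rightarrow> nat \<Rightarrow> real" where
  "J3_mat n = sparse_mat (J23_col1 n) (J3_coef1 n) (J23_col2 n) (J3_coef2 n)"
definition G_mat :: "nat \<Rightarrow> nat \<Rightarrow> nat \<Rightarrow> real" where
  "G_mat n = sparse_mat (G_col n) (G_coef n) (G_col n) (\<lambda>_. 0)"
definition R_mat :: "nat \<Rightarrow> nat \<Rightarrow> nat \<Rightarrow> real" where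
  "R_mat n = sparse_mat (R_col n) (R_coef n) (R_col n) (\<lambda>_. 0)"

lemma app_J1: "app n (J1_mat n) x i = (if i < gdim n then J1_coef n i * x (J1_col n i) else 0)"
  unfolding J1_mat_def by (subst app_sparse_mat) (auto simp: J1_col_def gdim_def)
lemma app_J2:
  "app n (J2_mat n) x i
     = (if i < gdim n then J2_coef1 n i * x (J23_col1 n i) + J2_coef2 n i * x (J23_col2 n i) else 0)"
  unfolding J2_mat_def by (subst app_sparse_mat) (auto simp: J23_col1_def J23_col2_def gdim_def)
lemma app_J3:
  "app n (J3_mat n) x i
     = (if i < gdim n then J3_coef1 n i * x (J23_col1 n i) + J3_coef2 n i * x (J23_col2 n i) else 0)"
  unfolding J3_mat_def by (subst app_sparse_mat) (auto simp: J23_col1_def J23_col2_def gdim_def)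
lemma app_G: "app n (G_mat n) x i = (if i < gdim n then G_coef n i * x (G_col n i) else 0)"
  unfolding G_mat_def by (subst app_sparse_mat) (auto simp: G_col_def gdim_def)
lemma app_R: "app n (R_mat n) x i = (if i < gdim n then R_coef n i * x (R_col n i) else 0)"
  unfolding R_mat_def by (subst app_sparse_mat) (auto simp: R_col_def gdim_def)

context
  fixes n j :: nat and x :: "nat \<Rightarrow> real"
  assumes j: "j < n"
begin

lemma J1_V:
  "app n (J1_mat n) x j = x j" "app n (J1_mat n) x (j + n) = x (j + n)"
  "app n (J1_mat n) x (j + 2 * n) = - x (j + 2 * n)" "app n (J1_mat n) x (j + 3 * n) = - x (j + 3 * n)"
  using j by (simp add: app_J1 structure_coef_defs gdim_def; simp add: algebra_simps mult_2_right)+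

lemma J2_V:
  "app n (J2_mat n) x j = - x (j + 2 * n)" "app n (J2_mat n) x (j + n) = - x (j + 3 * n)"
  "app n (J2_mat n) x (j + 2 * n) = - x j" "app n (J2_mat n) x (j + 3 * n) = - x (j + n)"
  using j by (simp add: app_J2 structure_coef_defs gdim_def; simp add: algebra_simps mult_2_right)+

lemma J3_V:
  "app n (J3_mat n) x j = - x (j + 2 * n)" "app n (J3_mat n) x (j + n) = - x (j + 3 * n)"
  "app n (J3_mat n) x (j + 2 * n) = x j" "app n (J3_mat n) x (j + 3 * n) = x (j + n)"
  using j by (simp add: app_J3 structure_coef_defs gdim_def; simp add: algebra_simps mult_2_right)+

lemma G_V:
  "app n (G_mat n) x j = x (j + 3 * n)" "app n (G_mat n) x (j + n) = - x (j + 2 * n)"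
  "app n (G_mat n) x (j + 2 * n) = - x (j + n)" "app n (G_mat n) x (j + 3 * n) = x j"
  using j by (simp add: app_G structure_coef_defs gdim_def; simp add: algebra_simps mult_2_right)+

lemma R_V:
  "app n (R_mat n) x j = - x (j + n)" "app n (R_mat n) x (j + n) = x j"
  "app n (R_mat n) x (j + 2 * n) = - x (j + 3 * n)" "app n (R_mat n) x (j + 3 * n) = x (j + 2 * n)"
  using j by (simp add: app_R structure_coef_defs gdim_def; simp add: algebra_simps mult_2_right)+

end

lemma J1_ZHEF:
  "app n (J1_mat n) x (idx_Z n) = 2 * x (idx_H n)" "app n (J1_mat n) x (idx_H n) = x (idx_Z n) / 2"
  "app n (J1_mat n) x (idx_E n) = x (idx_E n)" "app n (J1_mat n) x (idx_F n) = - x (idx_F n)"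
  by (simp_all add: app_J1 structure_coef_defs idx_defs gdim_def)
lemma J2_ZHEF:
  "app n (J2_mat n) x (idx_Z n) = x (idx_E n) + x (idx_F n)"
  "app n (J2_mat n) x (idx_H n) = - x (idx_E n) / 2 + x (idx_F n) / 2"
  "app n (J2_mat n) x (idx_E n) = x (idx_Z n) / 2 - x (idx_H n)"
  "app n (J2_mat n) x (idx_F n) = x (idx_Z n) / 2 + x (idx_H n)"
  by (simp_all add: app_J2 structure_coef_defs idx_defs gdim_def)
lemma J3_ZHEF:
  "app n (J3_mat n) x (idx_Z n) = - x (idx_E n) + x (idx_F n)"
  "app n (J3_mat n) x (idx_H n) = x (idx_E n) / 2 + x (idx_F n) / 2"
  "app n (J3_mat n) x (idx_E n) = x (idx_Z n) / 2 - x (idx_H n)"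
  "app n (J3_mat n) x (idx_F n) = - x (idx_Z n) / 2 - x (idx_H n)"
  by (simp_all add: app_J3 structure_coef_defs idx_defs gdim_def)
lemma G_ZHEF:
  "app n (G_mat n) x (idx_Z n) = x (idx_Z n)" "app n (G_mat n) x (idx_H n) = -4 * x (idx_H n)"
  "app n (G_mat n) x (idx_E n) = -2 * x (idx_F n)" "app n (G_mat n) x (idx_F n) = -2 * x (idx_E n)"
  by (simp_all add: app_G structure_coef_defs idx_defs gdim_def)
lemma R_ZHEF:
  "app n (R_mat n) x (idx_Z n) = 0" "app n (R_mat n) x (idx_H n) = 0"
  "app n (R_mat n) x (idx_E n) = 0" "app n (R_mat n) x (idx_F n) = 0"
  by (simp_all add: app_R structure_coef_defs idx_defs gdim_def)

lemmas structure_V = J1_V J2_V J3_V G_V R_V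
lemmas structure_ZHEF = J1_ZHEF J2_ZHEF J3_ZHEF G_ZHEF R_ZHEF

lemma almost_hyper_paracomplex_J: "almost_hyper_paracomplex n (J1_mat n) (J2_mat n) (J3_mat n)"
  unfolding almost_hyper_paracomplex_def
  by (intro ballI conjI vec_eq_blocksI[where n=n];
      simp add: structure_V structure_ZHEF app_outside gvecs_outside; simp add: field_simps)

lemma omega_J1: "omega n (app n (J1_mat n) x) (app n (J1_mat n) y) = - omega n x y"
  unfolding omega_def sum_negf[symmetric] by (rule sum.cong) (simp_all add: structure_V)
lemma omega_J2: "omega n (app n (J2_mat n) x) (app n (J2_mat n) y) = - omega n x y"
  unfolding omega_def sum_negf[symmetric] by (rule sum.cong) (simp_all add: structure_V)
lemma omega_J3: "omega n (app n (J3_mat n) x) (app n (J3_mat n) y) = omega n x y"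
  unfolding omega_def by (rule sum.cong) (simp_all add: structure_V)
lemma omega_J1_skew: "omega n (app n (J1_mat n) x) y = - omega n x (app n (J1_mat n) y)"
  unfolding omega_def sum_negf[symmetric] by (rule sum.cong) (simp_all add: structure_V)
lemma omega_J2_skew: "omega n (app n (J2_mat n) x) y = - omega n x (app n (J2_mat n) y)"
  unfolding omega_def sum_negf[symmetric] by (rule sum.cong) (simp_all add: structure_V)
lemma omega_J3_skew: "omega n (app n (J3_mat n) x) y = - omega n x (app n (J3_mat n) y)"
  unfolding omega_def sum_negf[symmetric] by (rule sum.cong) (simp_all add: structure_V)

lemmas lbr_components = lbr_V lbr_Z lbr_H lbr_E lbr_F lbr_outside

lemma nijenhuis_J1: "nijenhuis n (J1_mat n) x y = (\<lambda>_. 0)"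
  unfolding nijenhuis_def
  using omega_J1_skew[of n x y]
  by (intro vec_eq_blocksI[where n=n];
      simp add: structure_V structure_ZHEF lbr_components app_outside omega_J1; simp add: field_simps)

lemma nijenhuis_J2: "nijenhuis n (J2_mat n) x y = (\<lambda>_. 0)"
  unfolding nijenhuis_def
  using omega_J2_skew[of n x y]
  by (intro vec_eq_blocksI[where n=n];
      simp add: structure_V structure_ZHEF lbr_components app_outside omega_J2; simp add: field_simps)

lemma nijenhuis_J3: "nijenhuis n (J3_mat n) x y = (\<lambda>_. 0)"
  unfolding nijenhuis_def
  using omega_J3_skew[of n x y]
  by (intro vec_eq_blocksI[where n=n];
      simp add: structure_V structure_ZHEF lbr_components app_outside omega_J3; simp add: field_simps)

lemma hyper_paracomplex_J: "hyper_paracomplex n (J1_mat n) (J2_mat n) (J3_mat n)"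
  unfolding hyper_paracomplex_def
  using almost_hyper_paracomplex_J nijenhuis_J1 nijenhuis_J2 nijenhuis_J3 by blast

definition g_V :: "nat \<Rightarrow> (nat \<Rightarrow> real) \<Rightarrow> (nat \<Rightarrow> real) \<Rightarrow> real" where
  "g_V n x y = (\<Sum>j<n. x j * y (j + 3 * n) - x (j + n) * y (j + 2 * n)
                     - x (j + 2 * n) * y (j + n) + x (j + 3 * n) * y j)"

lemma bil_G:
  "bil n (G_mat n) x y = g_V n x y + x (idx_Z n) * y (idx_Z n) - 4 * (x (idx_H n) * y (idx_H n))
     - 2 * (x (idx_E n) * y (idx_F n)) - 2 * (x (idx_F n) * y (idx_E n))"
  unfolding bil_app sum_gdim_blocks g_V_def
  by (simp add: structure_V structure_ZHEF cong: sum.cong_simp)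

lemma bil_G_sym: "bil n (G_mat n) x y = bil n (G_mat n) y x"
  unfolding bil_G g_V_def by (simp add: algebra_simps cong: sum.cong_simp)

lemma G_col_involutive: "i < gdim n \<Longrightarrow> G_col n (G_col n i) = i"
  by (auto simp: G_col_def gdim_def)

lemma G_col_less: "i < gdim n \<Longrightarrow> G_col n i < gdim n"
  by (auto simp: G_col_def gdim_def)

lemma G_coef_nonzero: "i < gdim n \<Longrightarrow> G_coef n i \<noteq> 0"
  by (auto simp: G_coef_def gdim_def)

lemma bil_G_basis_right:
  assumes "l < gdim n"
  shows "bil n (G_mat n) x (basis_vec l) = G_coef n (G_col n l) * x (G_col n l)"
proof -
  have "G_col n i = l \<longleftrightarrow> i = G_col n l" if "i < gdim n" for i
    using that assms G_col_involutive by metis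
  then show ?thesis
    unfolding bil_app app_G using assms G_col_less
    by (subst sum_eq_single[of "G_col n l"]) (auto simp: basis_vec_def)
qed

lemma metric_G: "metric n (G_mat n)"
  unfolding metric_def
proof (intro conjI ballI impI)
  fix x y
  show "bil n (G_mat n) x y = bil n (G_mat n) y x"
    by (rule bil_G_sym)
next
  fix x
  assume x: "x \<in> gvecs n" and null: "\<forall>y\<in>gvecs n. bil n (G_mat n) x y = 0"
  show "x = (\<lambda>_. 0)"
  proof
    fix k
    show "x k = 0"
    proof (cases "k < gdim n")
      case True
      then have "bil n (G_mat n) x (basis_vec (G_col n k)) = G_coef n k * x k"
        by (simp add: bil_G_basis_right G_col_less G_col_involutive)
      then show ?thesis
        using null basis_vec_in_gvecs G_col_less G_coef_nonzero True by fastforce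
    qed (use x gvecs_outside in auto)
  qed
qed

lemma g_V_J1: "g_V n (app n (J1_mat n) x) (app n (J1_mat n) y) = - g_V n x y"
  unfolding g_V_def sum_negf[symmetric] by (rule sum.cong) (simp_all add: structure_V)
lemma g_V_J2: "g_V n (app n (J2_mat n) x) (app n (J2_mat n) y) = - g_V n x y"
  unfolding g_V_def sum_negf[symmetric] by (rule sum.cong) (simp_all add: structure_V)
lemma g_V_J3: "g_V n (app n (J3_mat n) x) (app n (J3_mat n) y) = g_V n x y"
  unfolding g_V_def by (rule sum.cong) (simp_all add: structure_V)

lemma hyperparahermitian_G: "hyperparahermitian n (G_mat n) (J1_mat n) (J2_mat n) (J3_mat n)"
  unfolding hyperparahermitian_def bil_G
  by (intro conjI metric_G ballI; simp add: g_V_J1 g_V_J2 g_V_J3 structure_ZHEF; simp add: field_simps)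

definition Gam_Z :: "nat \<Rightarrow> nat \<Rightarrow> nat \<Rightarrow> nat \<Rightarrow> real" where
  "Gam_Z n i j k = (if i = idx_Z n then R_mat n k j else 0)"

lemma conn_Gam_Z: "conn n (Gam_Z n) x y = (\<lambda>k. x (idx_Z n) * app n (R_mat n) y k)"
proof
  fix k
  show "conn n (Gam_Z n) x y k = x (idx_Z n) * app n (R_mat n) y k"
  proof (cases "k < gdim n")
    case True
    have "conn n (Gam_Z n) x y k = (\<Sum>j<gdim n. x (idx_Z n) * y j * Gam_Z n (idx_Z n) j k)"
      using True by (simp add: conn_def, subst sum_eq_single[of "idx_Z n"])
        (auto simp: Gam_Z_def idx_Z_def gdim_def)
    then show ?thesis
      using True by (simp add: app_def Gam_Z_def sum_distrib_left mult_ac)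
  qed (simp add: conn_def app_outside)
qed

lemma conn_Gam_Z_V:
  assumes "j < n"
  shows "conn n (Gam_Z n) x y j = - (x (idx_Z n) * y (j + n))"
    "conn n (Gam_Z n) x y (j + n) = x (idx_Z n) * y j"
    "conn n (Gam_Z n) x y (j + 2 * n) = - (x (idx_Z n) * y (j + 3 * n))"
    "conn n (Gam_Z n) x y (j + 3 * n) = x (idx_Z n) * y (j + 2 * n)"
  using assms by (simp_all add: conn_Gam_Z structure_V)

lemma conn_Gam_Z_ZHEF:
  "conn n (Gam_Z n) x y (idx_Z n) = 0" "conn n (Gam_Z n) x y (idx_H n) = 0"
  "conn n (Gam_Z n) x y (idx_E n) = 0" "conn n (Gam_Z n) x y (idx_F n) = 0"
  by (simp_all add: conn_Gam_Z structure_ZHEF)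

lemma g_V_conn_Gam_Z_skew: "g_V n (conn n (Gam_Z n) x y) z + g_V n y (conn n (Gam_Z n) x z) = 0"
  unfolding g_V_def sum.distrib[symmetric]
  by (intro sum.neutral ballI) (simp add: conn_Gam_Z_V; simp add: algebra_simps)

lemma g_V_torsion_Gam_Z:
  "g_V n (torsion n (Gam_Z n) x y) z - omega n x y * z (idx_Z n)
     = - (g_V n (torsion n (Gam_Z n) x z) y - omega n x z * y (idx_Z n))"
proof -
  have "g_V n (torsion n (Gam_Z n) x y) z - omega n x y * z (idx_Z n)
      + (g_V n (torsion n (Gam_Z n) x z) y - omega n x z * y (idx_Z n)) = 0"
    unfolding g_V_def omega_def sum_distrib_right sum_subtractf[symmetric] sum.distrib[symmetric]
    by (intro sum.neutral ballI)
      (simp add: torsion_def conn_Gam_Z_V lbr_V; simp add: algebra_simps)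
  then show ?thesis by simp
qed

lemma hpkt_connection_Gam_Z: "hpkt_connection n (G_mat n) (J1_mat n) (J2_mat n) (J3_mat n) (Gam_Z n)"
  unfolding hpkt_connection_def
proof (intro conjI ballI)
  fix x y z :: "nat \<Rightarrow> real"
  show "bil n (G_mat n) (conn n (Gam_Z n) x y) z + bil n (G_mat n) y (conn n (Gam_Z n) x z) = 0"
    using g_V_conn_Gam_Z_skew[of n x y z] unfolding bil_G by (simp add: conn_Gam_Z_ZHEF)
  show "conn n (Gam_Z n) x (app n (J1_mat n) y) = app n (J1_mat n) (conn n (Gam_Z n) x y)"
    "conn n (Gam_Z n) x (app n (J2_mat n) y) = app n (J2_mat n) (conn n (Gam_Z n) x y)"
    "conn n (Gam_Z n) x (app n (J3_mat n) y) = app n (J3_mat n) (conn n (Gam_Z n) x y)"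
    by (intro vec_eq_blocksI[where n=n];
        simp add: conn_Gam_Z_V conn_Gam_Z_ZHEF structure_V structure_ZHEF conn_outside app_outside)+
  show "torsion_form n (G_mat n) (Gam_Z n) x y z = - torsion_form n (G_mat n) (Gam_Z n) x z y"
    using g_V_torsion_Gam_Z[of n x y z] unfolding torsion_form_def bil_G
    by (simp add: torsion_def conn_Gam_Z_ZHEF lbr_Z lbr_H lbr_E lbr_F algebra_simps)
qed

section \<open>Non-closedness of the torsion\<close>

lemma torsion_closed_center_terms:
  assumes "n \<ge> 1" "torsion_closed n G Gam"
  shows "torsion_form n G Gam (basis_vec (idx_Z n)) (basis_vec n) (basis_vec (3 * n))
       + torsion_form n G Gam (basis_vec (idx_Z n)) (basis_vec 0) (basis_vec (2 * n)) = 0"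
proof -
  let ?c = "torsion_form n G Gam" and ?e = basis_vec
  have three_n: "n + 2 * n = 3 * n"
    by simp
  have mem: "?e 0 \<in> gvecs n" "?e n \<in> gvecs n" "?e (2 * n) \<in> gvecs n" "?e (3 * n) \<in> gvecs n"
    by (simp_all add: basis_vec_in_gvecs gdim_def)
  have "- ?c (lbr n (?e 0) (?e n)) (?e (2 * n)) (?e (3 * n))
      + ?c (lbr n (?e 0) (?e (2 * n))) (?e n) (?e (3 * n))
      - ?c (lbr n (?e 0) (?e (3 * n))) (?e n) (?e (2 * n))
      - ?c (lbr n (?e n) (?e (2 * n))) (?e 0) (?e (3 * n))
      + ?c (lbr n (?e n) (?e (3 * n))) (?e 0) (?e (2 * n))
      - ?c (lbr n (?e (2 * n)) (?e (3 * n))) (?e 0) (?e n) = 0"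
    using assms(2)[unfolded torsion_closed_def Let_def, rule_format, OF mem] .
  moreover have "lbr n (?e 0) (?e n) = (\<lambda>_. 0)" "lbr n (?e 0) (?e (3 * n)) = (\<lambda>_. 0)"
    "lbr n (?e n) (?e (2 * n)) = (\<lambda>_. 0)" "lbr n (?e (2 * n)) (?e (3 * n)) = (\<lambda>_. 0)"
    using assms(1) by (auto intro!: lbr_basis_V_zero)
  moreover have "lbr n (?e 0) (?e (2 * n)) = ?e (idx_Z n)" "lbr n (?e n) (?e (3 * n)) = ?e (idx_Z n)"
    using assms(1) lbr_basis_pair[of 0 n] lbr_basis_pair[of n n] by (simp_all add: three_n)
  ultimately show ?thesis
    by (simp add: torsion_form_zero_left)
qed

definition half_EF :: "nat \<Rightarrow> nat \<Rightarrow> real" where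
  "half_EF n = (\<lambda>k. if k = idx_E n \<or> k = idx_F n then 1 / 2 else 0)"

lemma half_EF_in_gvecs: "half_EF n \<in> gvecs n"
  by (simp add: gvecs_def half_EF_def idx_defs gdim_def)

lemma J2_half_EF: "app n (J2_mat n) (half_EF n) = basis_vec (idx_Z n)"
  by (intro vec_eq_blocksI[where n=n];
      simp add: structure_V structure_ZHEF app_outside half_EF_def basis_vec_def; simp add: idx_defs gdim_def)

lemma J2_basis_X: "j < 2 * n \<Longrightarrow> app n (J2_mat n) (basis_vec j) = (\<lambda>k. - basis_vec (j + 2 * n) k)"
  by (auto simp: app_J2 structure_coef_defs basis_vec_def gdim_def intro!: ext)

lemma J2_basis_Y: "j < 2 * n \<Longrightarrow> app n (J2_mat n) (basis_vec (j + 2 * n)) = (\<lambda>k. - basis_vec j k)"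
  by (auto simp: app_J2 structure_coef_defs basis_vec_def gdim_def intro!: ext)

lemma lbr_basis_half_EF:
  assumes "a < 4 * n"
  shows "lbr n (basis_vec a) (half_EF n) = (\<lambda>_. 0)"
proof
  fix k
  have "(\<Sum>l<gdim n. half_EF n l * sc n a l k) = 0"
    using assms by (intro sum.neutral) (auto simp: half_EF_def idx_defs sc_def Let_def)
  then show "lbr n (basis_vec a) (half_EF n) k = 0"
    using assms by (simp add: lbr_basis_left gdim_def)
qed

lemma bil_G_Z_Z: "bil n (G_mat n) (basis_vec (idx_Z n)) (basis_vec (idx_Z n)) = 1"
proof -
  have "idx_Z n < gdim n"
    by (simp add: idx_Z_def gdim_def)
  then show ?thesis
    by (simp add: bil_G_basis_right) (simp add: G_col_def G_coef_def basis_vec_def idx_Z_def)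
qed

lemma torsion_form_Z_pair:
  assumes hpkt: "hpkt_connection n (G_mat n) (J1_mat n) (J2_mat n) (J3_mat n) Gam" and j: "j < 2 * n"
  shows "torsion_form n (G_mat n) Gam (basis_vec (idx_Z n)) (basis_vec j) (basis_vec (j + 2 * n)) = -1"
proof -
  let ?g = "bil n (G_mat n)"
  let ?X = "basis_vec j" and ?Y = "basis_vec (j + 2 * n)" and ?Z = "basis_vec (idx_Z n)"
  have mem: "?X \<in> gvecs n" "?Y \<in> gvecs n" "?Z \<in> gvecs n"
    using j by (simp_all add: basis_vec_in_gvecs idx_Z_def gdim_def)
  note hph = hyperparahermitian_G and ahp = almost_hyper_paracomplex_J and metric = metric_G
  have Z_eq: "?Z = app n (J2_mat n) (half_EF n)"
    by (rule J2_half_EF[symmetric])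
  have "?g (conn n Gam ?X ?Z) ?Y = 0"
    unfolding Z_eq using j
    by (intro hpkt_conn_J2_pairing_vanish[OF hph ahp hpkt mem(1) half_EF_in_gvecs mem(2)]
        J2_basis_Y lbr_basis_half_EF) auto
  then have XY: "?g (conn n Gam ?X ?Y) ?Z = 0"
    using hpkt_conn_skew_adjoint[OF metric hpkt mem(1,2,3)] by simp
  have "?g (conn n Gam ?Y ?Z) ?X = 0"
    unfolding Z_eq using j
    by (intro hpkt_conn_J2_pairing_vanish[OF hph ahp hpkt mem(2) half_EF_in_gvecs mem(1)]
        J2_basis_X lbr_basis_half_EF) auto
  then have YX: "?g (conn n Gam ?Y ?X) ?Z = 0"
    using hpkt_conn_skew_adjoint[OF metric hpkt mem(2,1,3)] by simp
  have "torsion_form n (G_mat n) Gam ?Z ?X ?Y = - torsion_form n (G_mat n) Gam ?X ?Z ?Y"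
    by (rule torsion_form_antisym)
  also have "\<dots> = torsion_form n (G_mat n) Gam ?X ?Y ?Z"
    using hpkt_torsion_form_antisym[OF hpkt mem(1,2,3)] by simp
  also have "\<dots> = - ?g (lbr n ?X ?Y) ?Z"
    unfolding torsion_form_expand XY YX by simp
  also have "\<dots> = -1"
    using j by (simp add: lbr_basis_pair bil_G_Z_Z)
  finally show ?thesis .
qed

lemma hpkt_connection_not_torsion_closed:
  assumes "n \<ge> 1" and hpkt: "hpkt_connection n (G_mat n) (J1_mat n) (J2_mat n) (J3_mat n) Gam"
  shows "\<not> torsion_closed n (G_mat n) Gam"
proof
  assume closed: "torsion_closed n (G_mat n) Gam"
  have "n + 2 * n = 3 * n"
    by simp
  then show False
    using torsion_closed_center_terms[OF assms(1) closed] torsion_form_Z_pair[OF hpkt, of n]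
      torsion_form_Z_pair[OF hpkt, of 0] assms(1)
    by simp
qed

theorem mainTheorem8:
  fixes n :: nat
  assumes "n \<ge> 1"
  shows "\<exists>G J1 J2 J3. invariant_HPKT n G J1 J2 J3 \<and>
           (\<forall>Gam. hpkt_connection n G J1 J2 J3 Gam \<longrightarrow> \<not> torsion_closed n G Gam)"
proof -
  have "invariant_HPKT n (G_mat n) (J1_mat n) (J2_mat n) (J3_mat n)"
    unfolding invariant_HPKT_def
    using hyper_paracomplex_J hyperparahermitian_G hpkt_connection_Gam_Z by blast
  then show ?thesis
    using hpkt_connection_not_torsion_closed[OF assms] by blast
qed

end
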